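(* Let $2<p<4$, assume (V), fix $k\in\mathbb{N}$ and $\mathbf{r}_k\in\Lambda_k$. Let $(u_1,\dots,u_{k+1})\in\mathbf{H}_k$ with $u_i\neq0$ and $$\frac{\big(\int_{B_i}|u_i|^p\,dx\big)^{2/p}}{\|u_i\|_i^2}\ \ge\ (2S_p)^{-1}\qquad\text{for } i=1,\dots,k+1.$$ Set $$\widehat b:=\frac{p-2}{4-p}\Big(1+k\,2^{\frac{2}{p-2}}\Big(\frac{2}{4-p}\Big)^{\frac{2}{p-2}}\Big)^{-1}\Big(\frac{4-p}{2}\Big)^{\frac{2}{p-2}}(2S_p)^{-\frac{p}{p-2}},\qquad b_*:=\min\Big\{\frac{p-2}{4-p}\Big(\frac{4-p}{2}\Big)^{\frac{2}{p-2}}(2S_p)^{-\frac{p}{p-2}},\ \widehat b\Big\}.$$ Then for each $b\in(0,b_* )$ there is a unique $(k+1)$-tuple $(t_1,\dots,t_{k+1})\in(0,\infty)^{k+1}$ such that $(t_1u_1,\dots,t_{k+1}u_{k+1})\in N_k^-$.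
   Context: Condition (V): $V$ is continuous, radial, and $\inf_{\mathbb{R}^3}V=V_0>0$. $\mathcal{H}$ is the space of radial $H^1(\mathbb{R}^3)$ functions with finite norm $\|u\|_{\mathcal{H}}^2=\int(|\nabla u|^2+V u^2)dx$, and $S_q:=\inf_{u\in\mathcal{H}\setminus\{0\}}\|u\|_{\mathcal{H}}^2/|u|_q^2$ for $q\in(2,6]$. $\Lambda_k:=\{\mathbf{r}_k=(r_1,\dots,r_k):0=:r_0<r_1<\dots<r_k<r_{k+1}:=\infty\}$; for $\mathbf{r}_k\in\Lambda_k$, $B_i:=\{x\in\mathbb{R}^3:r_{i-1}<|x|<r_i\}$, $i=1,\dots,k+1$. $\mathcal{H}_i:=\{u\in H^1_0(B_i): u \text{ radial},\ u=0 \text{ outside } B_i\}$ with norm $\|u\|_i^2=\int_{B_i}(|\nabla u|^2+V(|x|)u^2)dx$, and $\mathbf{H}_k:=\mathcal{H}_1\times\dots\times\mathcal{H}_{k+1}$. For $b>0$, $E_b(u_1,\dots,u_{k+1}):=\frac12\sum_i\|u_i\|_i^2+\frac b4\big(\sum_i\int_{B_i}|\nabla u_i|^2dx\big)^2-\frac1p\sum_i\int_{B_i}|u_i|^pdx$ (so $E_b(u_1,\dots,u_{k+1})=I_b(\sum_i u_i)$). The set $N_k^-$ consists of all $(u_1,\dots,u_{k+1})\in\mathbf{H}_k$ such that for every $i$: $u_i\neq0$, $\|u_i\|_i^2+b\big(\int_{B_i}|\nabla u_i|^2\big)^2+b\int_{B_i}|\nabla u_i|^2\sum_{j\neq i}\int_{B_j}|\nabla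 u_j|^2=\int_{B_i}|u_i|^p$ (i.e. $\langle\partial_{u_i}E_b,u_i\rangle=0$), and $(4-p)\int_{B_i}|u_i|^pdx<2\|u_i\|_i^2$. *)

theory Defs
  imports "HOL-Analysis.Analysis"
begin

type_synonym R3 = "real^3"

definition c1c_grad :: "(R3 \<Rightarrow> real) \<Rightarrow> (R3 \<Rightarrow> R3) \<Rightarrow> bool" where
  "c1c_grad phi dphi \<longleftrightarrow> continuous_on UNIV dphi
     \<and> (\<forall>x. (phi has_derivative (\<lambda>h. dphi x \<bullet> h)) (at x))
     \<and> compact (closure {x. phi x \<noteq> 0})"

definition test_fun :: "(R3 \<Rightarrow> real) \<Rightarrow> R3 set \<Rightarrow> bool" where
  "test_fun phi Omega \<longleftrightarrow> (\<exists>dphi. c1c_grad phi dphi) \<and> closure {x. phi x \<noteq> 0} \<subseteq> Omega"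

definition is_weak_grad :: "(R3 \<Rightarrow> real) \<Rightarrow> (R3 \<Rightarrow> R3) \<Rightarrow> bool" where
  "is_weak_grad u g \<longleftrightarrow> g \<in> borel_measurable lborel
     \<and> integrable lborel (\<lambda>x. (norm (g x))\<^sup>2)
     \<and> (\<forall>phi dphi. c1c_grad phi dphi \<longrightarrow>
          (\<forall>j. (\<integral>x. u x * (dphi x $ j) \<partial>lborel) = - (\<integral>x. (g x $ j) * phi x \<partial>lborel)))"

definition grad :: "(R3 \<Rightarrow> real) \<Rightarrow> R3 \<Rightarrow> R3" where
  "grad u = (SOME g. is_weak_grad u g)"

definition H1 :: "(R3 \<Rightarrow> real) \<Rightarrow> bool" where
  "H1 u \<longleftrightarrow> u \<in> borel_measurable lborel \<and> integrable lborel (\<lambda>x. (u x)\<^sup>2)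
     \<and> (\<exists>g. is_weak_grad u g)"

definition h1_sq :: "(R3 \<Rightarrow> real) \<Rightarrow> real" where
  "h1_sq u = (\<integral>x. (u x)\<^sup>2 \<partial>lborel) + (\<integral>x. (norm (grad u x))\<^sup>2 \<partial>lborel)"

definition H10 :: "R3 set \<Rightarrow> (R3 \<Rightarrow> real) \<Rightarrow> bool" where
  "H10 Omega u \<longleftrightarrow> H1 u \<and> (\<exists>phis. (\<forall>n. test_fun (phis n) Omega)
      \<and> (\<lambda>n. h1_sq (\<lambda>x. phis n x - u x)) \<longlonglongrightarrow> 0)"

definition radial :: "(R3 \<Rightarrow> real) \<Rightarrow> bool" where
  "radial u \<longleftrightarrow> (\<forall>x y. norm x = norm y \<longrightarrow> u x = u y)"

definition nonzero :: "(R3 \<Rightarrow> real) \<Rightarrow> bool" where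
  "nonzero u \<longleftrightarrow> \<not> (AE x in lborel. u x = 0)"

definition cond_V :: "(R3 \<Rightarrow> real) \<Rightarrow> bool" where
  "cond_V V \<longleftrightarrow> continuous_on UNIV V \<and> radial V \<and> bdd_below (range V) \<and> (INF x. V x) > 0"

definition Hsp :: "(R3 \<Rightarrow> real) \<Rightarrow> (R3 \<Rightarrow> real) \<Rightarrow> bool" where
  "Hsp V u \<longleftrightarrow> H1 u \<and> radial u \<and> integrable lborel (\<lambda>x. V x * (u x)\<^sup>2)"

definition Hnorm_sq :: "(R3 \<Rightarrow> real) \<Rightarrow> (R3 \<Rightarrow> real) \<Rightarrow> real" where
  "Hnorm_sq V u = (\<integral>x. (norm (grad u x))\<^sup>2 + V x * (u x)\<^sup>2 \<partial>lborel)"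

definition Lp_int :: "real \<Rightarrow> (R3 \<Rightarrow> real) \<Rightarrow> real" where
  "Lp_int q u = (\<integral>x. \<bar>u x\<bar> powr q \<partial>lborel)"

definition S_const :: "(R3 \<Rightarrow> real) \<Rightarrow> real \<Rightarrow> real" where
  "S_const V q = Inf {Hnorm_sq V u / (Lp_int q u) powr (2 / q) | u. Hsp V u \<and> nonzero u}"

text \<open>Lambda_k: r 0 = 0 < r 1 < ... < r k  (r (k+1) = infinity implicitly).\<close>
definition Lambda :: "nat \<Rightarrow> (nat \<Rightarrow> real) \<Rightarrow> bool" where
  "Lambda k r \<longleftrightarrow> r 0 = 0 \<and> (\<forall>i<k. r i < r (Suc i))"

text \<open>B_i = {r_(i-1) < |x| < r_i}, i = 1..k+1, with r_(k+1) = infinity.\<close>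
definition annulus :: "nat \<Rightarrow> (nat \<Rightarrow> real) \<Rightarrow> nat \<Rightarrow> R3 set" where
  "annulus k r i = {x. r (i - 1) < norm x \<and> (i \<le> k \<longrightarrow> norm x < r i)}"

definition Hi :: "(R3 \<Rightarrow> real) \<Rightarrow> nat \<Rightarrow> (nat \<Rightarrow> real) \<Rightarrow> nat \<Rightarrow> (R3 \<Rightarrow> real) \<Rightarrow> bool" where
  "Hi V k r i u \<longleftrightarrow> H10 (annulus k r i) u \<and> radial u \<and> (\<forall>x. x \<notin> annulus k r i \<longrightarrow> u x = 0)
     \<and> integrable lborel (\<lambda>x. V x * (u x)\<^sup>2)"

definition norm_i_sq :: "(R3 \<Rightarrow> real) \<Rightarrow> nat \<Rightarrow> (nat \<Rightarrow> real) \<Rightarrow> nat \<Rightarrow> (R3 \<Rightarrow> real) \<Rightarrow> real" where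
  "norm_i_sq V k r i u = (LINT x : annulus k r i | lborel. (norm (grad u x))\<^sup>2 + V x * (u x)\<^sup>2)"

definition dir_i :: "nat \<Rightarrow> (nat \<Rightarrow> real) \<Rightarrow> nat \<Rightarrow> (R3 \<Rightarrow> real) \<Rightarrow> real" where
  "dir_i k r i u = (LINT x : annulus k r i | lborel. (norm (grad u x))\<^sup>2)"

definition lp_i :: "real \<Rightarrow> nat \<Rightarrow> (nat \<Rightarrow> real) \<Rightarrow> nat \<Rightarrow> (R3 \<Rightarrow> real) \<Rightarrow> real" where
  "lp_i p k r i u = (LINT x : annulus k r i | lborel. \<bar>u x\<bar> powr p)"

definition Hk :: "(R3 \<Rightarrow> real) \<Rightarrow> nat \<Rightarrow> (nat \<Rightarrow> real) \<Rightarrow> (nat \<Rightarrow> R3 \<Rightarrow> real) \<Rightarrow> bool" where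
  "Hk V k r w \<longleftrightarrow> (\<forall>i\<in>{1..k+1}. Hi V k r i (w i))"

definition Nminus :: "(R3 \<Rightarrow> real) \<Rightarrow> real \<Rightarrow> real \<Rightarrow> nat \<Rightarrow> (nat \<Rightarrow> real) \<Rightarrow> (nat \<Rightarrow> R3 \<Rightarrow> real) \<Rightarrow> bool" where
  "Nminus V p b k r w \<longleftrightarrow> Hk V k r w \<and> (\<forall>i\<in>{1..k+1}.
      nonzero (w i)
      \<and> norm_i_sq V k r i (w i) + b * (dir_i k r i (w i))\<^sup>2
          + b * dir_i k r i (w i) * (\<Sum>j\<in>{1..k+1} - {i}. dir_i k r j (w j)) = lp_i p k r i (w i)
      \<and> (4 - p) * lp_i p k r i (w i) < 2 * norm_i_sq V k r i (w i))"

end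

theory Submission
  imports Defs
begin

(* Scaling u_i by t_i multiplies the quadratic quantities of the i-th component by t_i^2 and the
   L^p integral by t_i^p, once one knows that the weak gradient of t u is t times that of u; the
   latter follows from uniqueness of weak gradients, obtained by testing against C^1 bumps that
   converge to indicators of boxes.  The conditions defining N_k^- then become a scalar system:
   with D = sum_j t_j^2 |grad u_j|^2 the total Dirichlet energy, the i-th equation says
   t_i^(p-2) = (||u_i||^2 + b |grad u_i|^2 D) / |u_i|_p^p, so solutions correspond to fixed points
   D = F(D) of an explicit map F.  Since F(0) >= 0, and the bounds on b and on the ratios
   |u_i|_p^2 / ||u_i||^2 give F(D0) < D0 for D0 = (p-2) / ((4-p) b), a fixed point exists in
   [0, D0), and below D0 the strict inequality of N_k^- holds.  That inequality together with the
   convexity of s |-> s^(2/(p-2)) makes F(D) / D strictly decreasing across such fixed points,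
   so the fixed point, and hence the scaling, is unique. *)

section \<open>\<open>C\<^sup>1\<close> bump functions\<close>

definition pos_sq :: "real \<Rightarrow> real" where "pos_sq y = (max 0 y)\<^sup>2"

lemma pos_sq_has_real_derivative: "(pos_sq has_real_derivative 2 * max 0 y) (at y)"
proof -
  consider "y = 0" | "y > 0" | "y < 0" by linarith
  then show ?thesis
  proof cases
    case 1
    have "norm (pos_sq h / h) \<le> \<bar>h\<bar>" for h
      by (cases "h > 0") (simp_all add: pos_sq_def power2_eq_square)
    moreover have "((\<lambda>h::real. \<bar>h\<bar>) \<longlongrightarrow> 0) (at 0)"
      by (auto intro!: tendsto_eq_intros)
    ultimately have "((\<lambda>h. pos_sq h / h) \<longlongrightarrow> 0) (at 0)"
      by (blast intro: Lim_null_comparison always_eventually)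
    then show ?thesis using 1 by (simp add: DERIV_def pos_sq_def)
  next
    case 2
    have "((\<lambda>y. y\<^sup>2) has_real_derivative 2 * max 0 y) (at y)"
      using 2 by (auto intro!: derivative_eq_intros)
    then show ?thesis
      by (rule has_field_derivative_transform_within_open[where S = "{0<..}"])
         (use 2 in \<open>auto simp: pos_sq_def\<close>)
  next
    case 3
    have "((\<lambda>y. 0) has_real_derivative 2 * max 0 y) (at y)"
      using 3 by (auto intro!: derivative_eq_intros)
    then show ?thesis
      by (rule has_field_derivative_transform_within_open[where S = "{..<0}"])
         (use 3 in \<open>auto simp: pos_sq_def\<close>)
  qed
qed

definition smooth_step :: "real \<Rightarrow> real" where
  "smooth_step y = 2 * (pos_sq y - 2 * pos_sq (y - 1/2) + pos_sq (y - 1))"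

definition smooth_step' :: "real \<Rightarrow> real" where
  "smooth_step' y = 4 * (max 0 y - 2 * max 0 (y - 1/2) + max 0 (y - 1))"

lemma smooth_step_has_real_derivative: "(smooth_step has_real_derivative smooth_step' y) (at y)"
proof -
  have shift: "((\<lambda>y. pos_sq (y - c)) has_real_derivative 2 * max 0 (y - c)) (at y)" for c
    using DERIV_chain2[OF pos_sq_has_real_derivative DERIV_diff[OF DERIV_ident DERIV_const]]
    by simp
  have "((\<lambda>y. 2 * (pos_sq (y - 0) - 2 * pos_sq (y - 1/2) + pos_sq (y - 1))) has_real_derivative
      2 * (2 * max 0 (y - 0) - 2 * (2 * max 0 (y - 1/2)) + 2 * max 0 (y - 1))) (at y)"
    by (intro DERIV_cmult DERIV_add DERIV_diff shift)
  then show ?thesis unfolding smooth_step_def[abs_def] smooth_step'_def by (simp add: algebra_simps)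
qed

lemma continuous_on_smooth_step: "continuous_on UNIV smooth_step"
  unfolding smooth_step_def pos_sq_def by (intro continuous_intros)

lemma continuous_on_smooth_step': "continuous_on UNIV smooth_step'"
  unfolding smooth_step'_def by (intro continuous_intros)

lemma smooth_step_nonpos: "y \<le> 0 \<Longrightarrow> smooth_step y = 0"
  by (simp add: smooth_step_def pos_sq_def)

lemma smooth_step_ge_one: "1 \<le> y \<Longrightarrow> smooth_step y = 1"
  by (simp add: smooth_step_def pos_sq_def power2_eq_square algebra_simps)

lemma smooth_step_bounds: "0 \<le> smooth_step y \<and> smooth_step y \<le> 1"
proof -
  consider "y \<le> 0" | "0 \<le> y \<and> y \<le> 1/2" | "1/2 \<le> y \<and> y \<le> 1" | "1 \<le> y" by linarith
  then show ?thesis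
  proof cases
    case 2
    then have "smooth_step y = 2 * y\<^sup>2" by (simp add: smooth_step_def pos_sq_def)
    moreover have "y\<^sup>2 \<le> (1/2)\<^sup>2" using 2 by (intro power_mono) auto
    ultimately show ?thesis by (simp add: power2_eq_square)
  next
    case 3
    then have "smooth_step y = 1 - 2 * (1 - y)\<^sup>2"
      by (simp add: smooth_step_def pos_sq_def max_def power2_eq_square algebra_simps)
    moreover have "(1 - y)\<^sup>2 \<le> (1/2)\<^sup>2" using 3 by (intro power_mono) auto
    ultimately show ?thesis by (simp add: power2_eq_square)
  qed (auto simp: smooth_step_nonpos smooth_step_ge_one)
qed

definition interval_bump :: "real \<Rightarrow> real \<Rightarrow> real \<Rightarrow> real \<Rightarrow> real" where
  "interval_bump n \<alpha> \<beta> s = smooth_step (n * (s - \<alpha>)) * smooth_step (n * (\<beta> - s))"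

definition interval_bump' :: "real \<Rightarrow> real \<Rightarrow> real \<Rightarrow> real \<Rightarrow> real" where
  "interval_bump' n \<alpha> \<beta> s =
     n * smooth_step' (n * (s - \<alpha>)) * smooth_step (n * (\<beta> - s))
     - n * smooth_step (n * (s - \<alpha>)) * smooth_step' (n * (\<beta> - s))"

lemma interval_bump_has_real_derivative:
  "(interval_bump n \<alpha> \<beta> has_real_derivative interval_bump' n \<alpha> \<beta> s) (at s)"
proof -
  have "((\<lambda>s. n * (s - \<alpha>)) has_real_derivative n) (at s)"
    and "((\<lambda>s. n * (\<beta> - s)) has_real_derivative - n) (at s)"
    by (auto intro!: derivative_eq_intros)
  from DERIV_mult[OF DERIV_chain2[OF smooth_step_has_real_derivative this(1)]
                     DERIV_chain2[OF smooth_step_has_real_derivative this(2)]]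
  show ?thesis unfolding interval_bump_def[abs_def] interval_bump'_def by (simp add: algebra_simps)
qed

lemma continuous_on_interval_bump: "continuous_on UNIV (interval_bump n \<alpha> \<beta>)"
  unfolding interval_bump_def[abs_def]
  by (intro continuous_intros continuous_on_compose2[OF continuous_on_smooth_step]) auto

lemma continuous_on_interval_bump': "continuous_on UNIV (interval_bump' n \<alpha> \<beta>)"
  unfolding interval_bump'_def[abs_def]
  by (intro continuous_intros continuous_on_compose2[OF continuous_on_smooth_step]
      continuous_on_compose2[OF continuous_on_smooth_step']) auto

lemma interval_bump_bounds: "0 \<le> interval_bump n \<alpha> \<beta> s \<and> interval_bump n \<alpha> \<beta> s \<le> 1"
  unfolding interval_bump_def
  using smooth_step_bounds[of "n * (s - \<alpha>)"] smooth_step_bounds[of "n * (\<beta> - s)"]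
  by (auto intro: mult_le_one)

lemma interval_bump_nonzero_imp_between:
  assumes "0 < n" "interval_bump n \<alpha> \<beta> s \<noteq> 0"
  shows "\<alpha> < s \<and> s < \<beta>"
proof (rule ccontr)
  assume "\<not> (\<alpha> < s \<and> s < \<beta>)"
  then have "n * (s - \<alpha>) \<le> 0 \<or> n * (\<beta> - s) \<le> 0"
    using assms(1) by (auto simp: mult_le_0_iff)
  then show False using assms(2) by (auto simp: interval_bump_def smooth_step_nonpos)
qed

lemma interval_bump_eq_one:
  "1 \<le> n * (s - \<alpha>) \<Longrightarrow> 1 \<le> n * (\<beta> - s) \<Longrightarrow> interval_bump n \<alpha> \<beta> s = 1"
  by (simp add: interval_bump_def smooth_step_ge_one)

lemma eventually_interval_bump_eq_one:
  assumes "\<alpha> < s" "s < \<beta>"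
  shows "eventually (\<lambda>N. interval_bump (real N) \<alpha> \<beta> s = 1) sequentially"
proof -
  obtain N :: nat where "1 / (s - \<alpha>) < N" "1 / (\<beta> - s) < N"
    using reals_Archimedean2[of "max (1 / (s - \<alpha>)) (1 / (\<beta> - s))"] by auto
  then have N1: "1 \<le> real N * (s - \<alpha>)" "1 \<le> real N * (\<beta> - s)"
    using assms by (auto simp: field_simps)
  have "1 \<le> real m * (s - \<alpha>) \<and> 1 \<le> real m * (\<beta> - s)" if "N \<le> m" for m
  proof -
    have "real N * (s - \<alpha>) \<le> real m * (s - \<alpha>)" "real N * (\<beta> - s) \<le> real m * (\<beta> - s)"
      using that assms by (auto intro!: mult_right_mono)
    then show ?thesis using N1 by linarith
  qed
  then show ?thesis
    by (intro eventually_sequentiallyI[of N]) (blast intro: interval_bump_eq_one)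
qed

definition box_bump :: "real \<Rightarrow> real^'n \<Rightarrow> real^'n \<Rightarrow> real^'n \<Rightarrow> real" where
  "box_bump n a b x = (\<Prod>i\<in>UNIV. interval_bump n (a$i) (b$i) (x$i))"

definition box_bump_grad :: "real \<Rightarrow> real^'n \<Rightarrow> real^'n \<Rightarrow> real^'n \<Rightarrow> real^'n" where
  "box_bump_grad n a b x =
     (\<chi> i. interval_bump' n (a$i) (b$i) (x$i) * (\<Prod>j\<in>UNIV - {i}. interval_bump n (a$j) (b$j) (x$j)))"

lemma box_bump_has_derivative:
  "(box_bump n a b has_derivative (\<lambda>h. box_bump_grad n a b x \<bullet> h)) (at x)"
proof -
  have "((\<lambda>x. interval_bump n (a$i) (b$i) (x$i)) has_derivative
          (\<lambda>y. interval_bump' n (a$i) (b$i) (x$i) * y$i)) (at x)" for i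
  proof -
    have "((\<lambda>x. x$i) has_derivative (\<lambda>y. y$i)) (at x)"
      by (rule bounded_linear_imp_has_derivative[OF bounded_linear_vec_nth])
    from has_derivative_compose[OF this
        has_field_derivative_imp_has_derivative[OF interval_bump_has_real_derivative]]
    show ?thesis by simp
  qed
  then have "(box_bump n a b has_derivative
     (\<lambda>y. \<Sum>i\<in>UNIV. interval_bump' n (a$i) (b$i) (x$i) * y$i
                      * (\<Prod>j\<in>UNIV - {i}. interval_bump n (a$j) (b$j) (x$j)))) (at x)"
    unfolding box_bump_def[abs_def] by (rule has_derivative_prod)
  then show ?thesis
    by (rule has_derivative_eq_rhs) (auto simp: box_bump_grad_def inner_vec_def intro!: ext sum.cong)
qed

lemma continuous_on_box_bump: "continuous_on UNIV (box_bump n a b)"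
  unfolding box_bump_def[abs_def]
  by (intro continuous_intros continuous_on_compose2[OF continuous_on_interval_bump]) auto

lemma continuous_on_box_bump_grad: "continuous_on UNIV (box_bump_grad n a b)"
  unfolding box_bump_grad_def[abs_def]
  by (intro continuous_intros continuous_on_compose2[OF continuous_on_interval_bump']
      continuous_on_compose2[OF continuous_on_interval_bump]) auto

lemma borel_measurable_box_bump[measurable]: "box_bump n a b \<in> borel_measurable borel"
  by (rule borel_measurable_continuous_onI[OF continuous_on_box_bump])

lemma box_bump_bounds: "0 \<le> box_bump n a b x \<and> box_bump n a b x \<le> 1"
  unfolding box_bump_def using interval_bump_bounds by (auto intro!: prod_nonneg prod_le_1)

lemma box_bump_support: "0 < n \<Longrightarrow> {x. box_bump n a b x \<noteq> 0} \<subseteq> box a b"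
proof
  fix x assume n: "0 < n" and "x \<in> {x. box_bump n a b x \<noteq> 0}"
  then have "interval_bump n (a$i) (b$i) (x$i) \<noteq> 0" for i by (auto simp: box_bump_def)
  then show "x \<in> box a b" using interval_bump_nonzero_imp_between[OF n] by (auto simp: mem_box_cart)
qed

lemma box_bump_eq_zero: "0 < n \<Longrightarrow> x \<notin> box a b \<Longrightarrow> box_bump n a b x = 0"
  using box_bump_support by blast

lemma box_bump_tendsto_indicator:
  "(\<lambda>N. box_bump (real N) a b x) \<longlonglongrightarrow> indicator (box a b) x"
proof (cases "x \<in> box a b")
  case True
  then have "eventually (\<lambda>N. \<forall>i. interval_bump (real N) (a$i) (b$i) (x$i) = 1) sequentially"
    by (intro eventually_all_finite eventually_interval_bump_eq_one) (auto simp: mem_box_cart)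
  then have "eventually (\<lambda>N. box_bump (real N) a b x = 1) sequentially"
    by eventually_elim (simp add: box_bump_def)
  then show ?thesis using True by (simp add: tendsto_eventually)
next
  case False
  then have "eventually (\<lambda>N. box_bump (real N) a b x = 0) sequentially"
    by (auto intro!: eventually_sequentiallyI[of 1] box_bump_eq_zero)
  then show ?thesis using False by (simp add: tendsto_eventually)
qed

lemma c1c_grad_box_bump: "0 < n \<Longrightarrow> c1c_grad (box_bump n a b) (box_bump_grad n a b)"
  using bounded_subset[OF bounded_box box_bump_support] continuous_on_box_bump_grad box_bump_has_derivative
  by (auto simp: c1c_grad_def compact_closure)

section \<open>Uniqueness of weak gradients\<close>

lemma AE_zero_if_box_integrals_zero:
  fixes h :: "'a::euclidean_space \<Rightarrow> real"
  assumes h[measurable]: "h \<in> borel_measurable lborel"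
    and box_int: "\<And>a b. set_integrable lborel (box a b) h"
    and zero: "\<And>a b. (LINT x:box a b|lborel. h x) = 0"
  shows "AE x in lborel. h x = 0"
proof -
  have pos_eq_neg: "(\<integral>\<^sup>+x\<in>box a b. ennreal (h x) \<partial>lborel) = (\<integral>\<^sup>+x\<in>box a b. ennreal (- h x) \<partial>lborel)"
    and finite_on_box: "(\<integral>\<^sup>+x\<in>box a b. ennreal (h x) \<partial>lborel) < \<infinity>" for a b
  proof -
    let ?f = "\<lambda>x. indicator (box a b) x * h x"
    have f: "integrable lborel ?f" using box_int[of a b] by (simp add: set_integrable_def)
    have "ennreal (h x) * indicator (box a b) x = ennreal (?f x)"
      and "ennreal (- h x) * indicator (box a b) x = ennreal (- ?f x)" for x
      by (auto split: split_indicator)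
    then have eqs: "(\<integral>\<^sup>+x\<in>box a b. ennreal (h x) \<partial>lborel) = (\<integral>\<^sup>+x. ennreal (?f x) \<partial>lborel)"
        "(\<integral>\<^sup>+x\<in>box a b. ennreal (- h x) \<partial>lborel) = (\<integral>\<^sup>+x. ennreal (- ?f x) \<partial>lborel)"
      by simp_all
    let ?P = "\<integral>\<^sup>+x. ennreal (?f x) \<partial>lborel" and ?N = "\<integral>\<^sup>+x. ennreal (- ?f x) \<partial>lborel"
    have "enn2real ?P - enn2real ?N = 0"
      using zero[of a b] real_lebesgue_integral_def[OF f] by (simp add: set_lebesgue_integral_def)
    moreover have "?P = ennreal (enn2real ?P)" "?N = ennreal (enn2real ?N)"
      using integrableD(2,3)[OF f] by (simp_all add: less_top)
    ultimately show "(\<integral>\<^sup>+x\<in>box a b. ennreal (h x) \<partial>lborel) = (\<integral>\<^sup>+x\<in>box a b. ennreal (- h x) \<partial>lborel)"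
      unfolding eqs by simp
    show "(\<integral>\<^sup>+x\<in>box a b. ennreal (h x) \<partial>lborel) < \<infinity>"
      unfolding eqs using integrableD(2)[OF f] by (simp add: less_top)
  qed
  have "density lborel (\<lambda>x. ennreal (h x)) = density lborel (\<lambda>x. ennreal (- h x))"
  proof (rule measure_eqI_generator_eq[where E = "range (\<lambda>(a, b). box a b)" and \<Omega> = UNIV
        and A = "\<lambda>n. box (- (real n *\<^sub>R One)) (real n *\<^sub>R One)"])
    show "Int_stable (range (\<lambda>(a, b). box a b :: 'a set))"
      by (auto simp: Int_stable_def box_Int_box)
    show "sets (density lborel (\<lambda>x. ennreal (h x))) = sigma_sets UNIV (range (\<lambda>(a, b). box a b))"
      and "sets (density lborel (\<lambda>x. ennreal (- h x))) = sigma_sets UNIV (range (\<lambda>(a, b). box a b))"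
      by (simp_all add: borel_eq_box)
    show "(\<Union>n. box (- (real n *\<^sub>R One)) (real n *\<^sub>R One :: 'a)) = UNIV"
      by (rule UN_box_eq_UNIV)
    show "range (\<lambda>(a, b). box a b :: 'a set) \<subseteq> Pow UNIV"
      by simp
    show "range (\<lambda>n. box (- (real n *\<^sub>R One)) (real n *\<^sub>R One :: 'a)) \<subseteq> range (\<lambda>(a, b). box a b)"
      by auto
    show "emeasure (density lborel (\<lambda>x. ennreal (h x))) (box (- (real n *\<^sub>R One)) (real n *\<^sub>R One)) \<noteq> \<infinity>" for n
      using finite_on_box by (simp add: emeasure_density less_top)
    show "emeasure (density lborel (\<lambda>x. ennreal (h x))) X = emeasure (density lborel (\<lambda>x. ennreal (- h x))) X"
      if "X \<in> range (\<lambda>(a, b). box a b)" for X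
      using that pos_eq_neg by (auto simp: emeasure_density)
  qed
  then have "AE x in lborel. ennreal (h x) = ennreal (- h x)"
    by (intro sigma_finite_measure.density_unique[OF lborel.sigma_finite_measure_axioms]) simp_all
  then show ?thesis
  proof eventually_elim
    case (elim x)
    then show "h x = 0"
      by (cases "0 \<le> h x") (simp_all add: ennreal_neg ennreal_eq_0_iff)
  qed
qed

lemma set_integrable_if_square_integrable:
  fixes h :: "'a \<Rightarrow> real"
  assumes [measurable]: "h \<in> borel_measurable M" "B \<in> sets M"
    and square: "integrable M (\<lambda>x. (h x)\<^sup>2)" and finite_B: "emeasure M B < \<infinity>"
  shows "set_integrable M B h"
  unfolding set_integrable_def
proof (rule Bochner_Integration.integrable_bound[where f = "\<lambda>x. (h x)\<^sup>2 + indicator B x"])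
  show "integrable M (\<lambda>x. (h x)\<^sup>2 + indicator B x)"
    using square finite_B by (intro Bochner_Integration.integrable_add) (simp_all add: less_top)
  have "\<bar>y\<bar> \<le> y\<^sup>2 + 1" for y :: real
    using sum_squares_ge_zero[of "\<bar>y\<bar> - 1" 0] by (simp add: power2_eq_square algebra_simps abs_mult_self_eq)
  then show "AE x in M. norm (indicator B x *\<^sub>R h x) \<le> norm ((h x)\<^sup>2 + indicator B x)"
    by (intro AE_I2) (auto split: split_indicator)
qed simp

lemma continuous_on_c1c_grad: "c1c_grad \<phi> d\<phi> \<Longrightarrow> continuous_on S \<phi>"
  unfolding c1c_grad_def by (metis continuous_at_imp_continuous_on has_derivative_continuous)

lemma c1c_grad_bounded:
  assumes "c1c_grad \<phi> d\<phi>"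
  obtains B c where "\<And>x. \<bar>\<phi> x\<bar> \<le> B" and "\<And>x. x \<notin> cbox (- c) c \<Longrightarrow> \<phi> x = 0"
proof -
  let ?K = "closure {x. \<phi> x \<noteq> 0}"
  have "compact ?K" using assms by (simp add: c1c_grad_def)
  have "continuous_on ?K \<phi>" using continuous_on_c1c_grad[OF assms] .
  then obtain B where "0 < B" and B: "\<And>x. x \<in> ?K \<Longrightarrow> \<bar>\<phi> x\<bar> \<le> B"
    using compact_imp_bounded[OF compact_continuous_image[OF \<open>continuous_on ?K \<phi>\<close> \<open>compact ?K\<close>]]
    unfolding bounded_pos by auto
  have "\<bar>\<phi> x\<bar> \<le> B" for x
    using B[of x] \<open>0 < B\<close> closure_subset[of "{x. \<phi> x \<noteq> 0}"] by (cases "\<phi> x = 0") auto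
  moreover obtain c where "?K \<subseteq> cbox (- c) c"
    using bounded_subset_cbox_symmetric[OF compact_imp_bounded[OF \<open>compact ?K\<close>]] by blast
  ultimately show ?thesis using that closure_subset[of "{x. \<phi> x \<noteq> 0}"] by blast
qed

lemma integrable_mult_c1c_grad:
  fixes f :: "R3 \<Rightarrow> real"
  assumes f[measurable]: "f \<in> borel_measurable lborel"
    and local_int: "\<And>a b. set_integrable lborel (cbox a b) f"
    and \<phi>: "c1c_grad \<phi> d\<phi>"
  shows "integrable lborel (\<lambda>x. f x * \<phi> x)"
proof -
  obtain B c where B: "\<And>x. \<bar>\<phi> x\<bar> \<le> B" and c: "\<And>x. x \<notin> cbox (- c) c \<Longrightarrow> \<phi> x = 0"
    using c1c_grad_bounded[OF \<phi>] by blast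
  have [measurable]: "\<phi> \<in> borel_measurable lborel"
    using continuous_on_c1c_grad[OF \<phi>] by (simp add: borel_measurable_continuous_onI)
  show ?thesis
  proof (rule Bochner_Integration.integrable_bound)
    show "integrable lborel (\<lambda>x. B * \<bar>indicator (cbox (- c) c) x * f x\<bar>)"
      using local_int[of "- c" c] by (intro integrable_mult_right integrable_abs) (simp add: set_integrable_def)
    show "AE x in lborel. norm (f x * \<phi> x) \<le> norm (B * \<bar>indicator (cbox (- c) c) x * f x\<bar>)"
    proof (intro AE_I2)
      fix x
      have "\<bar>\<phi> x\<bar> \<le> \<bar>B\<bar>" using B[of x] by linarith
      then show "norm (f x * \<phi> x) \<le> norm (B * \<bar>indicator (cbox (- c) c) x * f x\<bar>)"
        using c[of x] by (auto simp: abs_mult mult.commute intro!: mult_right_mono split: split_indicator)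
    qed
  qed simp
qed

lemma AE_zero_if_orthogonal_to_c1c_grad:
  fixes h :: "R3 \<Rightarrow> real"
  assumes h[measurable]: "h \<in> borel_measurable lborel"
    and local_int: "\<And>a b. set_integrable lborel (cbox a b) h"
    and orth: "\<And>\<phi> d\<phi>. c1c_grad \<phi> d\<phi> \<Longrightarrow> (\<integral>x. h x * \<phi> x \<partial>lborel) = 0"
  shows "AE x in lborel. h x = 0"
proof (rule AE_zero_if_box_integrals_zero[OF h])
  show "set_integrable lborel (box a b) h" for a b
    by (rule set_integrable_subset[OF local_int[of a b]]) (auto simp: box_subset_cbox)
  show "(LINT x:box a b|lborel. h x) = 0" for a b
  proof -
    let ?s = "\<lambda>N. \<integral>x. h x * box_bump (real N) a b x \<partial>lborel"
    have lim: "?s \<longlonglongrightarrow> (\<integral>x. h x * indicator (box a b) x \<partial>lborel)"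
    proof (rule integral_dominated_convergence[where w = "\<lambda>x. \<bar>indicator (cbox a b) x * h x\<bar>"])
      show "integrable lborel (\<lambda>x. \<bar>indicator (cbox a b) x * h x\<bar>)"
        using local_int[of a b] by (intro integrable_abs) (simp add: set_integrable_def)
      show "AE x in lborel. (\<lambda>N. h x * box_bump (real N) a b x) \<longlonglongrightarrow> h x * indicator (box a b) x"
        by (intro AE_I2 tendsto_mult tendsto_const box_bump_tendsto_indicator)
      show "AE x in lborel. norm (h x * box_bump (real N) a b x) \<le> \<bar>indicator (cbox a b) x * h x\<bar>" for N
      proof (intro AE_I2)
        fix x
        have "x \<notin> cbox a b \<Longrightarrow> box_bump (real N) a b x = 0"
          using box_bump_support[of "real N" a b] box_subset_cbox[of a b]
          by (cases "N = 0") (auto simp: box_bump_def interval_bump_def smooth_step_nonpos)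
        then show "norm (h x * box_bump (real N) a b x) \<le> \<bar>indicator (cbox a b) x * h x\<bar>"
          using box_bump_bounds[of "real N" a b x]
          by (auto simp: abs_mult mult_left_le split: split_indicator)
      qed
    qed simp_all
    have "eventually (\<lambda>N. ?s N = 0) sequentially"
      by (intro eventually_sequentiallyI[of 1] orth[OF c1c_grad_box_bump]) simp
    then have "(\<integral>x. h x * indicator (box a b) x \<partial>lborel) = 0"
      using LIMSEQ_unique[OF lim tendsto_eventually] by blast
    then show ?thesis by (simp add: set_lebesgue_integral_def mult.commute)
  qed
qed

lemma is_weak_grad_component:
  assumes "is_weak_grad w g"
  shows "(\<lambda>x. g x $ j) \<in> borel_measurable lborel"
    and "set_integrable lborel (cbox a b) (\<lambda>x. g x $ j)"
proof -
  have g: "g \<in> borel_measurable lborel" and "integrable lborel (\<lambda>x. (norm (g x))\<^sup>2)"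
    using assms by (auto simp: is_weak_grad_def)
  show [measurable]: "(\<lambda>x. g x $ j) \<in> borel_measurable lborel"
    using measurable_compose[OF g borel_measurable_nth] by simp
  have "(v $ j)\<^sup>2 \<le> (norm v)\<^sup>2" for v :: R3
    using component_le_norm_cart[of v j] abs_le_square_iff[of "v $ j" "norm v"] by simp
  then have "integrable lborel (\<lambda>x. (g x $ j)\<^sup>2)"
    by (intro Bochner_Integration.integrable_bound[OF \<open>integrable _ _\<close>] AE_I2) auto
  then show "set_integrable lborel (cbox a b) (\<lambda>x. g x $ j)"
    by (intro set_integrable_if_square_integrable) (simp_all add: emeasure_lborel_cbox_eq)
qed

lemma is_weak_grad_unique:
  assumes g: "is_weak_grad w g" and g': "is_weak_grad w g'"
  shows "AE x in lborel. g x = g' x"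
proof -
  have "AE x in lborel. g x $ j - g' x $ j = 0" for j
  proof (rule AE_zero_if_orthogonal_to_c1c_grad)
    note [measurable] = is_weak_grad_component(1)[OF g] is_weak_grad_component(1)[OF g']
    show "(\<lambda>x. g x $ j - g' x $ j) \<in> borel_measurable lborel" by measurable
    show "set_integrable lborel (cbox a b) (\<lambda>x. g x $ j - g' x $ j)" for a b
      by (intro set_integral_diff(1) is_weak_grad_component(2)[OF g] is_weak_grad_component(2)[OF g'])
    show "(\<integral>x. (g x $ j - g' x $ j) * \<phi> x \<partial>lborel) = 0" if \<phi>: "c1c_grad \<phi> d\<phi>" for \<phi> d\<phi>
    proof -
      have "(\<integral>x. w x * (d\<phi> x $ j) \<partial>lborel) = - (\<integral>x. (g x $ j) * \<phi> x \<partial>lborel)"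
        and "(\<integral>x. w x * (d\<phi> x $ j) \<partial>lborel) = - (\<integral>x. (g' x $ j) * \<phi> x \<partial>lborel)"
        using g g' \<phi> unfolding is_weak_grad_def by blast+
      moreover have "(\<integral>x. (g x $ j - g' x $ j) * \<phi> x \<partial>lborel)
          = (\<integral>x. (g x $ j) * \<phi> x \<partial>lborel) - (\<integral>x. (g' x $ j) * \<phi> x \<partial>lborel)"
        unfolding left_diff_distrib
        by (intro Bochner_Integration.integral_diff integrable_mult_c1c_grad[OF _ _ \<phi>]
            is_weak_grad_component[OF g] is_weak_grad_component[OF g'])
      ultimately show ?thesis by simp
    qed
  qed
  then have "AE x in lborel. \<forall>j\<in>UNIV. g x $ j = g' x $ j"
    by (intro AE_finite_allI) auto
  then show ?thesis by eventually_elim (simp add: vec_eq_iff)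
qed

section \<open>Scaling\<close>

lemma is_weak_grad_scale:
  assumes "is_weak_grad w g"
  shows "is_weak_grad (\<lambda>x. t * w x) (\<lambda>x. t *\<^sub>R g x)"
  unfolding is_weak_grad_def
proof (intro conjI allI impI)
  have g[measurable]: "g \<in> borel_measurable lborel" and "integrable lborel (\<lambda>x. (norm (g x))\<^sup>2)"
    using assms by (auto simp: is_weak_grad_def)
  then show "(\<lambda>x. t *\<^sub>R g x) \<in> borel_measurable lborel"
    and "integrable lborel (\<lambda>x. (norm (t *\<^sub>R g x))\<^sup>2)"
    by (simp_all add: power_mult_distrib)
  fix \<phi> d\<phi> j assume "c1c_grad \<phi> d\<phi>"
  then have "(\<integral>x. w x * (d\<phi> x $ j) \<partial>lborel) = - (\<integral>x. (g x $ j) * \<phi> x \<partial>lborel)"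
    using assms by (auto simp: is_weak_grad_def)
  then show "(\<integral>x. t * w x * (d\<phi> x $ j) \<partial>lborel) = - (\<integral>x. ((t *\<^sub>R g x) $ j) * \<phi> x \<partial>lborel)"
    by (simp add: mult.assoc)
qed

lemma grad_is_weak_grad: "\<exists>g. is_weak_grad w g \<Longrightarrow> is_weak_grad w (grad w)"
  unfolding grad_def by (rule someI_ex[where P = "is_weak_grad w"])

lemma borel_measurable_grad: "\<exists>g. is_weak_grad w g \<Longrightarrow> grad w \<in> borel_measurable lborel"
  using grad_is_weak_grad[of w] by (auto simp: is_weak_grad_def)

lemma grad_scale_AE:
  assumes "\<exists>g. is_weak_grad w g"
  shows "AE x in lborel. grad (\<lambda>x. t * w x) x = t *\<^sub>R grad w x"
proof -
  have scaled: "is_weak_grad (\<lambda>x. t * w x) (\<lambda>x. t *\<^sub>R grad w x)"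
    by (rule is_weak_grad_scale[OF grad_is_weak_grad[OF assms]])
  then have "is_weak_grad (\<lambda>x. t * w x) (grad (\<lambda>x. t * w x))"
    by (intro grad_is_weak_grad) blast
  from is_weak_grad_unique[OF this scaled] show ?thesis .
qed

text \<open>Without a weak gradient, \<^const>\<open>grad\<close> is an unspecified \<open>SOME\<close>-value; scaling by
  \<open>t \<noteq> 0\<close> leaves the (empty) predicate it is chosen from, hence the value, unchanged.\<close>

lemma grad_scale_no_weak_grad:
  assumes "\<nexists>g. is_weak_grad w g" "t \<noteq> 0"
  shows "grad (\<lambda>x. t * w x) = grad w"
proof -
  have "\<not> is_weak_grad (\<lambda>x. t * w x) g" for g
    using is_weak_grad_scale[of "\<lambda>x. t * w x" g "1 / t"] assms by auto
  then show ?thesis using assms(1) by (simp add: grad_def)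
qed

lemma integral_grad_scale:
  assumes "\<exists>g. is_weak_grad w g" "A \<in> sets lborel"
  shows "(LINT x:A|lborel. (norm (grad (\<lambda>x. t * w x) x))\<^sup>2)
       = t\<^sup>2 * (LINT x:A|lborel. (norm (grad w x))\<^sup>2)"
proof -
  have [measurable]: "grad (\<lambda>x. t * w x) \<in> borel_measurable lborel" "grad w \<in> borel_measurable lborel"
    and [measurable]: "A \<in> sets lborel"
    using is_weak_grad_scale[OF grad_is_weak_grad[OF assms(1)]] assms by (blast intro: borel_measurable_grad)+
  have "(LINT x:A|lborel. (norm (grad (\<lambda>x. t * w x) x))\<^sup>2) = (LINT x:A|lborel. (norm (t *\<^sub>R grad w x))\<^sup>2)"
    unfolding set_lebesgue_integral_def
    using grad_scale_AE[OF assms(1), of t] by (intro integral_cong_AE) (measurable, auto elim!: eventually_mono)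
  then show ?thesis by (simp add: power_mult_distrib)
qed

lemma h1_sq_nonneg: "0 \<le> h1_sq w"
  unfolding h1_sq_def by (intro add_nonneg_nonneg integral_nonneg_AE) auto

lemma h1_sq_scale_le:
  assumes "t \<noteq> 0"
  shows "h1_sq (\<lambda>x. t * w x) \<le> max (t\<^sup>2) 1 * h1_sq w"
proof -
  let ?A = "\<integral>x. (w x)\<^sup>2 \<partial>lborel" and ?B = "\<integral>x. (norm (grad w x))\<^sup>2 \<partial>lborel"
  have "0 \<le> ?A" "0 \<le> ?B" by (auto intro: integral_nonneg_AE)
  then have A: "(\<integral>x. (t * w x)\<^sup>2 \<partial>lborel) \<le> max (t\<^sup>2) 1 * ?A"
    by (simp add: power_mult_distrib mult_right_mono)
  have B: "(\<integral>x. (norm (grad (\<lambda>x. t * w x) x))\<^sup>2 \<partial>lborel) \<le> max (t\<^sup>2) 1 * ?B"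
  proof (cases "\<exists>g. is_weak_grad w g")
    case True
    then show ?thesis
      using integral_grad_scale[OF True, of UNIV t] \<open>0 \<le> ?B\<close>
      by (simp add: set_lebesgue_integral_def mult_right_mono)
  next
    case False
    then show ?thesis
      using \<open>0 \<le> ?B\<close> mult_right_mono[of 1 "max (t\<^sup>2) 1" ?B]
      by (simp add: grad_scale_no_weak_grad assms)
  qed
  from add_mono[OF A B] show ?thesis by (simp add: h1_sq_def distrib_left)
qed

lemma test_fun_scale:
  assumes "test_fun \<phi> \<Omega>" "t \<noteq> 0"
  shows "test_fun (\<lambda>x. t * \<phi> x) \<Omega>"
proof -
  obtain d\<phi> where c: "c1c_grad \<phi> d\<phi>" and "closure {x. \<phi> x \<noteq> 0} \<subseteq> \<Omega>"
    using assms(1) by (auto simp: test_fun_def)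
  moreover have "{x. t * \<phi> x \<noteq> 0} = {x. \<phi> x \<noteq> 0}" using assms(2) by auto
  moreover have "c1c_grad (\<lambda>x. t * \<phi> x) (\<lambda>x. t *\<^sub>R d\<phi> x)"
    unfolding c1c_grad_def
  proof (intro conjI allI)
    show "continuous_on UNIV (\<lambda>x. t *\<^sub>R d\<phi> x)"
      using c by (auto simp: c1c_grad_def intro: continuous_intros)
    show "((\<lambda>x. t * \<phi> x) has_derivative (\<lambda>h. (t *\<^sub>R d\<phi> x) \<bullet> h)) (at x)" for x
      using has_derivative_mult_right[of \<phi> "\<lambda>h. d\<phi> x \<bullet> h" "at x" t] c by (simp add: c1c_grad_def)
    show "compact (closure {x. t * \<phi> x \<noteq> 0})"
      using c \<open>{x. t * \<phi> x \<noteq> 0} = _\<close> by (simp add: c1c_grad_def)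
  qed
  ultimately show ?thesis by (auto simp: test_fun_def)
qed

lemma H1_scale: "H1 u \<Longrightarrow> H1 (\<lambda>x. t * u x)"
  unfolding H1_def by (auto simp: power_mult_distrib dest: is_weak_grad_scale[of u _ t])

lemma H10_scale:
  assumes "H10 \<Omega> u" "t \<noteq> 0"
  shows "H10 \<Omega> (\<lambda>x. t * u x)"
proof -
  obtain \<phi> where \<phi>: "\<And>n. test_fun (\<phi> n) \<Omega>" and lim: "(\<lambda>n. h1_sq (\<lambda>x. \<phi> n x - u x)) \<longlonglongrightarrow> 0"
    using assms(1) by (auto simp: H10_def)
  have "(\<lambda>n. h1_sq (\<lambda>x. t * \<phi> n x - t * u x)) \<longlonglongrightarrow> 0"
  proof (rule tendsto_sandwich[OF _ _ tendsto_const])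
    show "\<forall>\<^sub>F n in sequentially. 0 \<le> h1_sq (\<lambda>x. t * \<phi> n x - t * u x)"
      by (simp add: h1_sq_nonneg)
    have "h1_sq (\<lambda>x. t * \<phi> n x - t * u x) \<le> max (t\<^sup>2) 1 * h1_sq (\<lambda>x. \<phi> n x - u x)" for n
      using h1_sq_scale_le[OF assms(2), of "\<lambda>x. \<phi> n x - u x"] by (simp add: right_diff_distrib)
    then show "\<forall>\<^sub>F n in sequentially. h1_sq (\<lambda>x. t * \<phi> n x - t * u x)
        \<le> max (t\<^sup>2) 1 * h1_sq (\<lambda>x. \<phi> n x - u x)"
      by simp
    show "(\<lambda>n. max (t\<^sup>2) 1 * h1_sq (\<lambda>x. \<phi> n x - u x)) \<longlonglongrightarrow> 0"
      using tendsto_mult_right_zero[OF lim] by simp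
  qed
  moreover have "H1 (\<lambda>x. t * u x)" using assms(1) by (intro H1_scale) (simp add: H10_def)
  ultimately show ?thesis
    using test_fun_scale[OF \<phi> assms(2)] unfolding H10_def
    by (intro conjI exI[where x = "\<lambda>n x. t * \<phi> n x"]) auto
qed

lemma open_annulus: "open (annulus k r i)"
proof -
  have "open {x::R3. r (i - 1) < norm x}" "open {x::R3. norm x < r i}"
    by (intro open_Collect_less continuous_intros)+
  moreover have "annulus k r i = {x. r (i - 1) < norm x} \<inter> (if i \<le> k then {x. norm x < r i} else UNIV)"
    by (auto simp: annulus_def)
  ultimately show ?thesis by (simp add: open_Int)
qed

lemma sets_annulus[measurable]: "annulus k r i \<in> sets borel"
  using open_annulus by simp

lemma Hi_scale:
  assumes "Hi V k r i u" "t \<noteq> 0"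
  shows "Hi V k r i (\<lambda>x. t * u x)"
proof -
  have H: "H10 (annulus k r i) u" "radial u" "\<forall>x. x \<notin> annulus k r i \<longrightarrow> u x = 0"
    "integrable lborel (\<lambda>x. V x * (u x)\<^sup>2)"
    using assms(1) unfolding Hi_def by blast+
  have "(\<lambda>x. V x * (t * u x)\<^sup>2) = (\<lambda>x. t\<^sup>2 * (V x * (u x)\<^sup>2))"
    by (simp add: power_mult_distrib algebra_simps)
  then have "integrable lborel (\<lambda>x. V x * (t * u x)\<^sup>2)"
    using H(4) by simp
  moreover have "radial (\<lambda>x. t * u x)"
    using H(2) unfolding radial_def by metis
  ultimately show ?thesis
    using H(3) H10_scale[OF H(1) assms(2)] unfolding Hi_def by simp
qed

lemma nonzero_scale: "t \<noteq> 0 \<Longrightarrow> nonzero (\<lambda>x. t * u x) = nonzero u"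
  by (simp add: nonzero_def)

lemma lp_i_scale: "0 < t \<Longrightarrow> lp_i p k r i (\<lambda>x. t * u x) = t powr p * lp_i p k r i u"
  by (simp add: lp_i_def abs_mult powr_mult)

lemma dir_i_scale: "H1 u \<Longrightarrow> dir_i k r i (\<lambda>x. t * u x) = t\<^sup>2 * dir_i k r i u"
  unfolding dir_i_def H1_def by (intro integral_grad_scale) (simp_all add: sets_annulus)

lemma norm_i_sq_scale:
  assumes "H1 u" and [measurable]: "V \<in> borel_measurable borel"
  shows "norm_i_sq V k r i (\<lambda>x. t * u x) = t\<^sup>2 * norm_i_sq V k r i u"
proof -
  have "\<exists>g. is_weak_grad u g" and [measurable]: "u \<in> borel_measurable lborel"
    using assms(1) by (auto simp: H1_def)
  moreover from this have [measurable]: "grad u \<in> borel_measurable lborel"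
    and [measurable]: "grad (\<lambda>x. t * u x) \<in> borel_measurable lborel"
    using is_weak_grad_scale[OF grad_is_weak_grad] by (blast intro: borel_measurable_grad)+
  ultimately have "norm_i_sq V k r i (\<lambda>x. t * u x)
      = (LINT x:annulus k r i|lborel. (norm (t *\<^sub>R grad u x))\<^sup>2 + V x * (t * u x)\<^sup>2)"
    unfolding norm_i_sq_def set_lebesgue_integral_def
    using grad_scale_AE[of u t] by (intro integral_cong_AE) (measurable, auto elim!: eventually_mono)
  also have "\<dots> = (LINT x:annulus k r i|lborel. t\<^sup>2 * ((norm (grad u x))\<^sup>2 + V x * (u x)\<^sup>2))"
    by (simp add: power_mult_distrib algebra_simps)
  finally show ?thesis by (simp add: norm_i_sq_def)
qed

section \<open>The scalar fibering system\<close>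

lemma powr_diff_le_tangent:
  fixes x y e :: real
  assumes "0 < x" "x \<le> y" "1 \<le> e"
  shows "y powr e - x powr e \<le> e * y powr (e - 1) * (y - x)"
proof (cases "x = y")
  case False
  then have "x < y" using assms by simp
  moreover have "((\<lambda>z. z powr e) has_real_derivative e * z powr (e - 1)) (at z)" if "x \<le> z" for z
    using that assms by (intro has_real_derivative_powr) auto
  ultimately obtain z where z: "x < z" "z < y" "y powr e - x powr e = (y - x) * (e * z powr (e - 1))"
    using MVT2[of x y "\<lambda>z. z powr e" "\<lambda>z. e * z powr (e - 1)"] by blast
  have "z powr (e - 1) \<le> y powr (e - 1)" using z assms by (intro powr_mono2) auto
  then have "(y - x) * (e * z powr (e - 1)) \<le> (y - x) * (e * y powr (e - 1))"
    using \<open>x < y\<close> assms by (intro mult_left_mono) auto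
  then show ?thesis using z(3) by (simp only: ac_simps)
qed simp

lemma powr_eq_square_mult:
  assumes "0 < (t::real)"
  shows "t powr p = t\<^sup>2 * t powr (p - 2)"
proof -
  have "t powr p = t powr 2 * t powr (p - 2)" by (simp add: powr_add[symmetric])
  then show ?thesis using assms by (simp add: powr_numeral)
qed

lemma powr_square: "0 < (x::real) \<Longrightarrow> (x powr e)\<^sup>2 = x powr (2 * e)"
  by (simp add: power2_eq_square powr_add[symmetric])

text \<open>The conditions of \<open>N\<^sub>k\<^sup>-\<close> for the tuple \<open>(t\<^sub>i u\<^sub>i)\<close>, with \<open>a i\<close>, \<open>d i\<close>, \<open>c i\<close> standing
  for \<open>\<parallel>u\<^sub>i\<parallel>\<^sub>i\<^sup>2\<close>, \<open>\<integral>\<^bsub>B\<^sub>i\<^esub> |\<nabla>u\<^sub>i|\<^sup>2\<close> and \<open>\<integral>\<^bsub>B\<^sub>i\<^esub> |u\<^sub>i|\<^sup>p\<close>.\<close>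

definition Nminus_scaling ::
    "nat set \<Rightarrow> (nat \<Rightarrow> real) \<Rightarrow> (nat \<Rightarrow> real) \<Rightarrow> (nat \<Rightarrow> real) \<Rightarrow> real \<Rightarrow> real \<Rightarrow> (nat \<Rightarrow> real) \<Rightarrow> bool"
  where "Nminus_scaling I a d c p b t \<longleftrightarrow> (\<forall>i\<in>I.
     (t i)\<^sup>2 * a i + b * ((t i)\<^sup>2 * d i)\<^sup>2 + b * ((t i)\<^sup>2 * d i) * (\<Sum>j\<in>I - {i}. (t j)\<^sup>2 * d j)
       = t i powr p * c i
     \<and> (4 - p) * (t i powr p * c i) < 2 * ((t i)\<^sup>2 * a i))"

locale Nminus_scaling_problem =
  fixes I :: "nat set" and a d c :: "nat \<Rightarrow> real" and p b :: real
  assumes finite_I: "finite I"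
    and p_gt_2: "2 < p" and p_lt_4: "p < 4" and b_pos: "0 < b"
    and coeffs: "\<And>i. i \<in> I \<Longrightarrow> 0 \<le> d i \<and> d i \<le> a i \<and> 0 < a i \<and> 0 < c i"
begin

text \<open>With \<open>D = (\<Sum>j\<in>I. (t j)\<^sup>2 * d j)\<close> the total Dirichlet energy, the \<open>i\<close>-th equation reads
  \<open>t i powr (p - 2) = level i D\<close>; so a solution is determined by a fixed point of \<open>energy\<close>.\<close>

definition level :: "nat \<Rightarrow> real \<Rightarrow> real" where
  "level i D = (a i + b * d i * D) / c i"

definition energy :: "real \<Rightarrow> real" where
  "energy D = (\<Sum>i\<in>I. d i * level i D powr (2 / (p - 2)))"

definition admissible :: "real \<Rightarrow> bool" where
  "admissible D \<longleftrightarrow> 0 \<le> D \<and> energy D = D \<and> (\<forall>i\<in>I. (4 - p) * (a i + b * d i * D) < 2 * a i)"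

lemma level_pos: "i \<in> I \<Longrightarrow> 0 \<le> D \<Longrightarrow> 0 < level i D"
  using coeffs[of i] b_pos unfolding level_def
  by (intro divide_pos_pos add_pos_nonneg mult_nonneg_nonneg) auto

lemma Nminus_scaling_iff_level:
  assumes "\<forall>i\<in>I. 0 < t i"
  defines "D \<equiv> \<Sum>j\<in>I. (t j)\<^sup>2 * d j"
  shows "Nminus_scaling I a d c p b t \<longleftrightarrow>
    (\<forall>i\<in>I. t i powr (p - 2) = level i D \<and> (4 - p) * (a i + b * d i * D) < 2 * a i)"
proof -
  have "((t i)\<^sup>2 * a i + b * ((t i)\<^sup>2 * d i)\<^sup>2 + b * ((t i)\<^sup>2 * d i) * (\<Sum>j\<in>I - {i}. (t j)\<^sup>2 * d j)
         = t i powr p * c i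
       \<and> (4 - p) * (t i powr p * c i) < 2 * ((t i)\<^sup>2 * a i))
    \<longleftrightarrow> t i powr (p - 2) = level i D \<and> (4 - p) * (a i + b * d i * D) < 2 * a i"
    if i: "i \<in> I" for i
  proof -
    have ti: "0 < (t i)\<^sup>2" and ci: "0 < c i" using assms(1) coeffs i by auto
    have lhs: "(t i)\<^sup>2 * a i + b * ((t i)\<^sup>2 * d i)\<^sup>2 + b * ((t i)\<^sup>2 * d i) * (\<Sum>j\<in>I - {i}. (t j)\<^sup>2 * d j)
        = (t i)\<^sup>2 * (a i + b * d i * D)"
      unfolding sum_diff1[OF finite_I] D_def using i by (simp add: power2_eq_square algebra_simps)
    have rhs: "t i powr p * c i = (t i)\<^sup>2 * (t i powr (p - 2) * c i)"
      using powr_eq_square_mult[of "t i" p] assms(1) i by simp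
    have "(t i)\<^sup>2 * (a i + b * d i * D) = (t i)\<^sup>2 * (t i powr (p - 2) * c i)
        \<longleftrightarrow> a i + b * d i * D = t i powr (p - 2) * c i"
      using ti by simp
    also have "\<dots> \<longleftrightarrow> t i powr (p - 2) = level i D"
      using ci by (auto simp: level_def field_simps)
    finally have "(t i)\<^sup>2 * (a i + b * d i * D) = (t i)\<^sup>2 * (t i powr (p - 2) * c i)
        \<longleftrightarrow> t i powr (p - 2) = level i D" .
    moreover have "(4 - p) * ((t i)\<^sup>2 * (a i + b * d i * D)) < 2 * ((t i)\<^sup>2 * a i)
        \<longleftrightarrow> (4 - p) * (a i + b * d i * D) < 2 * a i"
      using mult_less_cancel_left_pos[OF ti, of "(4 - p) * (a i + b * d i * D)" "2 * a i"]
      by (simp add: ac_simps)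
    ultimately show ?thesis unfolding lhs rhs by auto
  qed
  then show ?thesis unfolding Nminus_scaling_def by blast
qed

lemma Nminus_scaling_imp_admissible:
  assumes t: "\<forall>i\<in>I. 0 < t i" and "Nminus_scaling I a d c p b t"
  defines "D \<equiv> \<Sum>j\<in>I. (t j)\<^sup>2 * d j"
  shows "admissible D" and "\<forall>i\<in>I. t i = level i D powr (1 / (p - 2))"
proof -
  have D: "0 \<le> D" unfolding D_def using coeffs by (intro sum_nonneg) auto
  have eqs: "\<forall>i\<in>I. t i powr (p - 2) = level i D \<and> (4 - p) * (a i + b * d i * D) < 2 * a i"
    using assms Nminus_scaling_iff_level by blast
  have "level i D powr (1 / (p - 2)) = t i" if "i \<in> I" for i
  proof -
    have "level i D powr (1 / (p - 2)) = (t i powr (p - 2)) powr (1 / (p - 2))"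
      using eqs that by simp
    also have "\<dots> = t i" using p_gt_2 t that by (simp add: powr_powr less_imp_le)
    finally show ?thesis .
  qed
  then show t_eq: "\<forall>i\<in>I. t i = level i D powr (1 / (p - 2))" by simp
  have "energy D = (\<Sum>j\<in>I. d j * (level j D powr (1 / (p - 2)))\<^sup>2)"
    unfolding energy_def using level_pos[OF _ D] by (intro sum.cong) (auto simp: powr_square)
  also have "\<dots> = (\<Sum>j\<in>I. (t j)\<^sup>2 * d j)" using t_eq by (intro sum.cong) (auto simp: mult.commute)
  also have "\<dots> = D" by (simp add: D_def)
  finally show "admissible D" using D eqs unfolding admissible_def by blast
qed

lemma admissible_imp_Nminus_scaling:
  assumes "admissible D"
  defines "t \<equiv> \<lambda>i. level i D powr (1 / (p - 2))"
  shows "\<forall>i\<in>I. 0 < t i" and "Nminus_scaling I a d c p b t"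
proof -
  have D: "0 \<le> D" and fixed: "energy D = D"
    and ineq: "\<forall>i\<in>I. (4 - p) * (a i + b * d i * D) < 2 * a i"
    using assms(1) unfolding admissible_def by auto
  have "0 < t i" if "i \<in> I" for i unfolding t_def using level_pos[OF that D] by simp
  then show t: "\<forall>i\<in>I. 0 < t i" by blast
  have "(\<Sum>j\<in>I. (t j)\<^sup>2 * d j) = energy D"
    unfolding energy_def t_def using level_pos[OF _ D]
    by (intro sum.cong) (auto simp: powr_square mult.commute)
  moreover have "t i powr (p - 2) = level i D" if "i \<in> I" for i
    using level_pos[OF that D] p_gt_2 by (simp add: t_def powr_powr)
  ultimately show "Nminus_scaling I a d c p b t"
    using Nminus_scaling_iff_level[OF t] fixed ineq by simp
qed

text \<open>The condition defining \<open>N\<^sub>k\<^sup>-\<close> makes \<open>energy D / D\<close> strictly decreasing through an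
  admissible point, by convexity of \<open>powr (2 / (p - 2))\<close>: there is at most one.\<close>

lemma admissible_increment_lt:
  assumes D1: "admissible D1" and D2: "admissible D2" and "D1 < D2" and i: "i \<in> I" "0 < d i"
  shows "d i * (level i D2 powr (2 / (p - 2)) - level i D1 powr (2 / (p - 2)))
    < d i * level i D2 powr (2 / (p - 2)) * (D2 - D1) / D2"
proof -
  define E where "E = 2 / (p - 2)"
  define x where "x = a i + b * d i * D2"
  have "0 \<le> D1" "(4 - p) * x < 2 * a i" using D1 D2 i unfolding admissible_def x_def by auto
  have "0 < D2" "1 \<le> E" using \<open>0 \<le> D1\<close> \<open>D1 < D2\<close> p_gt_2 p_lt_4 by (auto simp: E_def field_simps)
  have ci: "0 < c i" and "0 < b * d i" using coeffs[OF i(1)] i(2) b_pos by auto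
  have l1: "0 < level i D1" and l2: "0 < level i D2"
    using level_pos[OF i(1)] \<open>0 \<le> D1\<close> \<open>0 < D2\<close> by auto
  have "level i D1 \<le> level i D2"
    using \<open>D1 < D2\<close> \<open>0 < b * d i\<close> ci unfolding level_def
    by (intro divide_right_mono add_left_mono mult_left_mono) simp_all
  then have "level i D2 powr E - level i D1 powr E \<le> E * level i D2 powr (E - 1) * (level i D2 - level i D1)"
    by (rule powr_diff_le_tangent[OF l1 _ \<open>1 \<le> E\<close>])
  also have "\<dots> = level i D2 powr E * (D2 - D1) * (E * b * d i / x)"
  proof -
    have "level i D2 powr (E - 1) = level i D2 powr E / level i D2" using l2 by (simp add: powr_diff)
    moreover have "level i D2 - level i D1 = b * d i * (D2 - D1) / c i" and "level i D2 = x / c i"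
      using ci by (simp_all add: level_def x_def field_simps)
    moreover have "E * (Y / L) * (b * d i * (D2 - D1) / c i) = Y * (D2 - D1) * (E * b * d i / x)"
      if "0 < L" "L = x / c i" for L Y :: real
      using that ci by (auto simp: field_simps)
    ultimately show ?thesis using l2 by simp
  qed
  also have "\<dots> < level i D2 powr E * (D2 - D1) * (1 / D2)"
  proof (rule mult_strict_left_mono)
    have "E * (b * d i * D2) < x"
      using \<open>(4 - p) * x < 2 * a i\<close> p_gt_2 unfolding E_def x_def by (simp add: field_simps)
    then show "E * b * d i / x < 1 / D2"
      using \<open>0 < D2\<close> l2 ci by (simp add: x_def level_def field_simps zero_less_divide_iff)
    show "0 < level i D2 powr E * (D2 - D1)" using l2 \<open>D1 < D2\<close> by simp
  qed
  finally have "level i D2 powr E - level i D1 powr E < level i D2 powr E * (D2 - D1) / D2"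
    by simp
  from mult_strict_left_mono[OF this i(2)] show ?thesis unfolding E_def by simp
qed

lemma admissible_unique:
  assumes "admissible D1" "admissible D2"
  shows "D1 = D2"
proof (rule ccontr)
  assume "D1 \<noteq> D2"
  then obtain D D' where D: "admissible D" and D': "admissible D'" and "D < D'"
    using assms by (metis linorder_neqE_linordered_idom)
  have "0 \<le> D" "energy D = D" "energy D' = D'" using D D' by (auto simp: admissible_def)
  then have "0 < D'" using \<open>D < D'\<close> by simp
  have "\<exists>i\<in>I. 0 < d i"
  proof (rule ccontr)
    assume "\<not> (\<exists>i\<in>I. 0 < d i)"
    then have "\<forall>i\<in>I. d i = 0" using coeffs by force
    then have "energy D' = 0" by (simp add: energy_def)
    then show False using \<open>energy D' = D'\<close> \<open>0 < D'\<close> by simp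
  qed
  moreover have "d i * (level i D' powr (2 / (p - 2)) - level i D powr (2 / (p - 2)))
      \<le> d i * level i D' powr (2 / (p - 2)) * (D' - D) / D'" if "i \<in> I" for i
    using admissible_increment_lt[OF D D' \<open>D < D'\<close> that] coeffs[OF that]
    by (cases "d i = 0") auto
  ultimately have "(\<Sum>i\<in>I. d i * (level i D' powr (2 / (p - 2)) - level i D powr (2 / (p - 2))))
      < (\<Sum>i\<in>I. d i * level i D' powr (2 / (p - 2)) * (D' - D) / D')"
    using admissible_increment_lt[OF D D' \<open>D < D'\<close>]
    by (intro sum_strict_mono_ex1 finite_I) auto
  moreover have "(\<Sum>i\<in>I. d i * (level i D' powr (2 / (p - 2)) - level i D powr (2 / (p - 2))))
      = energy D' - energy D"
    by (simp add: energy_def sum_subtractf right_diff_distrib)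
  moreover have "(\<Sum>i\<in>I. d i * level i D' powr (2 / (p - 2)) * (D' - D) / D') = energy D' * (D' - D) / D'"
    by (simp only: energy_def sum_distrib_right sum_divide_distrib)
  ultimately have "energy D' - energy D < energy D' * (D' - D) / D'"
    by simp
  then show False using \<open>energy D = D\<close> \<open>energy D' = D'\<close> \<open>0 < D'\<close> by simp
qed

lemma level_threshold_bound:
  assumes S: "0 < S" and i: "i \<in> I" and ratio: "a i / (2 * S) \<le> c i powr (2 / p)"
  shows "d i * level i ((p - 2) / (4 - p) / b) powr (2 / (p - 2))
    \<le> (2 / (4 - p)) powr (2 / (p - 2)) * (2 * S) powr (p / (p - 2))"
proof -
  define E where "E = 2 / (p - 2)"
  define A where "A = 2 / (4 - p)"
  define M where "M = (2 * S) powr (p / (p - 2))"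
  have d: "0 \<le> d i" "d i \<le> a i" and ai: "0 < a i" and ci: "0 < c i" using coeffs[OF i] by auto
  have "0 < E" "1 \<le> A" "0 < M" using p_gt_2 p_lt_4 S by (auto simp: E_def A_def M_def field_simps)
  have "level i ((p - 2) / (4 - p) / b) = (a i + (p - 2) / (4 - p) * d i) / c i"
    using b_pos by (simp add: level_def)
  also have "\<dots> \<le> (a i + (p - 2) / (4 - p) * a i) / c i"
    using d ci p_gt_2 p_lt_4 by (intro divide_right_mono add_left_mono mult_left_mono) auto
  also have "\<dots> = A * a i / c i" using p_lt_4 by (simp add: A_def field_simps)
  finally have "level i ((p - 2) / (4 - p) / b) powr E \<le> (A * a i / c i) powr E"
    using level_pos[OF i, of "(p - 2) / (4 - p) / b"] b_pos p_gt_2 p_lt_4 \<open>0 < E\<close>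
    by (intro powr_mono2) auto
  also have "\<dots> = A powr E * a i powr E / c i powr E"
    using ai ci \<open>1 \<le> A\<close> by (simp add: powr_mult powr_divide)
  also have "\<dots> \<le> A powr E * (M / a i)"
  proof -
    have "(a i / (2 * S)) powr (p / (p - 2)) \<le> (c i powr (2 / p)) powr (p / (p - 2))"
      using ratio ai S p_gt_2 by (intro powr_mono2) auto
    then have "a i powr (p / (p - 2)) / M \<le> c i powr E"
      using p_gt_2 ci by (simp add: M_def E_def powr_divide powr_powr)
    then have "a i powr E / c i powr E \<le> a i powr E / (a i powr (p / (p - 2)) / M)"
      using ai ci \<open>0 < M\<close> by (intro divide_left_mono) auto
    also have "\<dots> = M * a i powr (E - p / (p - 2))"
      using ai \<open>0 < M\<close> by (simp add: powr_diff field_simps)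
    also have "E - p / (p - 2) = (2 - p) / (p - 2)"
      by (simp add: E_def diff_divide_distrib)
    also have "\<dots> = -1"
      using p_gt_2 by (simp add: divide_eq_eq)
    finally have "a i powr E / c i powr E \<le> M / a i"
      using ai by (simp add: powr_minus_divide)
    from mult_left_mono[OF this powr_ge_zero[of A E]] show ?thesis
      by (simp only: times_divide_eq_right)
  qed
  finally have "d i * level i ((p - 2) / (4 - p) / b) powr E \<le> d i * (A powr E * (M / a i))"
    using d by (intro mult_left_mono) auto
  also have "\<dots> \<le> A powr E * M"
    using d ai \<open>1 \<le> A\<close> \<open>0 < M\<close> by (simp add: field_simps mult_left_le)
  finally show ?thesis unfolding E_def A_def M_def .
qed

lemma admissible_exists:
  assumes S: "0 < S" and ratio: "\<And>i. i \<in> I \<Longrightarrow> a i / (2 * S) \<le> c i powr (2 / p)"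
    and small_b: "real (card I) * (2 / (4 - p)) powr (2 / (p - 2)) * (2 * S) powr (p / (p - 2))
      < (p - 2) / (4 - p) / b"
  shows "\<exists>D. admissible D"
proof -
  define D\<^sub>0 where "D\<^sub>0 = (p - 2) / (4 - p) / b"
  have "0 < D\<^sub>0" using p_gt_2 p_lt_4 b_pos by (simp add: D\<^sub>0_def)
  have "energy D\<^sub>0 \<le> real (card I) * ((2 / (4 - p)) powr (2 / (p - 2)) * (2 * S) powr (p / (p - 2)))"
    unfolding energy_def D\<^sub>0_def by (rule sum_bounded_above) (rule level_threshold_bound[OF S _ ratio])
  then have "energy D\<^sub>0 - D\<^sub>0 < 0" using small_b by (simp add: D\<^sub>0_def)
  moreover have "0 \<le> energy 0 - 0" using coeffs by (simp add: energy_def sum_nonneg)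
  moreover have "a i + b * d i * D \<noteq> 0" if "i \<in> I" "0 \<le> D" for i D
    using coeffs[OF that(1)] b_pos that(2) add_pos_nonneg[of "a i" "b * d i * D"] by simp
  then have "continuous_on {0..D\<^sub>0} (\<lambda>D. energy D - D)"
    unfolding energy_def level_def by (intro continuous_intros) (auto dest: coeffs)
  ultimately obtain D where D: "0 \<le> D" "D \<le> D\<^sub>0" "energy D - D = 0"
    using IVT2'[of "\<lambda>D. energy D - D" D\<^sub>0 0 0] \<open>0 < D\<^sub>0\<close> by auto
  then have "D < D\<^sub>0" using \<open>energy D\<^sub>0 - D\<^sub>0 < 0\<close> by (cases "D = D\<^sub>0") auto
  have "(4 - p) * (a i + b * d i * D) < 2 * a i" if i: "i \<in> I" for i
  proof -
    have "b * d i * D \<le> b * a i * D" using coeffs[OF i] b_pos D by (intro mult_right_mono mult_left_mono) auto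
    also have "\<dots> < b * a i * D\<^sub>0" using coeffs[OF i] b_pos \<open>D < D\<^sub>0\<close> by simp
    also have "\<dots> = (p - 2) / (4 - p) * a i" using b_pos by (simp add: D\<^sub>0_def)
    finally show ?thesis using p_lt_4 by (simp add: field_simps)
  qed
  then have "admissible D" using D unfolding admissible_def by simp
  then show ?thesis ..
qed

theorem Nminus_scaling_unique_solution:
  assumes "0 < S" "\<And>i. i \<in> I \<Longrightarrow> a i / (2 * S) \<le> c i powr (2 / p)"
    and "real (card I) * (2 / (4 - p)) powr (2 / (p - 2)) * (2 * S) powr (p / (p - 2))
      < (p - 2) / (4 - p) / b"
  shows "\<exists>t. (\<forall>i\<in>I. 0 < t i) \<and> Nminus_scaling I a d c p b t
    \<and> (\<forall>t'. (\<forall>i\<in>I. 0 < t' i) \<and> Nminus_scaling I a d c p b t' \<longrightarrow> (\<forall>i\<in>I. t' i = t i))"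
proof -
  obtain D where D: "admissible D" using admissible_exists[OF assms] by blast
  have "\<forall>i\<in>I. t' i = level i D powr (1 / (p - 2))"
    if "\<forall>i\<in>I. 0 < t' i" "Nminus_scaling I a d c p b t'" for t'
    using Nminus_scaling_imp_admissible[OF that] admissible_unique[OF D] by metis
  with admissible_imp_Nminus_scaling[OF D] show ?thesis
    by (intro exI[of _ "\<lambda>i. level i D powr (1 / (p - 2))"]) simp
qed

end

lemma lt_bhat_imp_threshold_bound:
  fixes p S b :: real and k :: nat
  assumes p: "2 < p" "p < 4" and "0 < S" "0 < b"
    and b: "b < (p - 2) / (4 - p)
      * inverse (1 + real k * 2 powr (2 / (p - 2)) * (2 / (4 - p)) powr (2 / (p - 2)))
      * ((4 - p) / 2) powr (2 / (p - 2)) * (2 * S) powr (- (p / (p - 2)))"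
  shows "real (k + 1) * (2 / (4 - p)) powr (2 / (p - 2)) * (2 * S) powr (p / (p - 2))
    < (p - 2) / (4 - p) / b"
proof -
  define E where "E = 2 / (p - 2)"
  define A where "A = (2 / (4 - p)) powr E"
  define M where "M = (2 * S) powr (p / (p - 2))"
  have "0 < E" "1 \<le> 2 / (4 - p)" using p by (auto simp: E_def field_simps)
  then have "1 \<le> A" "1 \<le> 2 powr E" "0 < M"
    using \<open>0 < S\<close> by (auto simp: A_def M_def ge_one_powr_ge_zero)
  have "((4 - p) / 2) powr E * A = (((4 - p) / 2) * (2 / (4 - p))) powr E"
    unfolding A_def using p by (intro powr_mult[symmetric])
  also have "((4 - p) / 2) * (2 / (4 - p)) = 1" using p by simp
  finally have inv_A: "((4 - p) / 2) powr E = 1 / A" using \<open>1 \<le> A\<close> by (simp add: field_simps)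
  have inv_M: "(2 * S) powr (- (p / (p - 2))) = 1 / M"
    by (simp add: M_def powr_minus_divide)
  have "0 < 1 + real k * 2 powr E * A" using \<open>1 \<le> A\<close> by (simp add: add_pos_nonneg)
  then have b_lt: "b < (p - 2) / (4 - p) / ((1 + real k * 2 powr E * A) * A * M)"
    using b unfolding E_def[symmetric] A_def[symmetric] inv_A inv_M
    by (simp add: divide_inverse mult_ac)
  have pos: "0 < (1 + real k * 2 powr E * A) * A * M"
    using \<open>0 < 1 + real k * 2 powr E * A\<close> \<open>1 \<le> A\<close> \<open>0 < M\<close> by simp
  have swap: "X < \<theta> / b" if "0 < X" "b < \<theta> / X" for X \<theta> :: real
  proof -
    have "b * X < \<theta>" using that by (simp add: pos_less_divide_eq)
    then show ?thesis by (simp add: pos_less_divide_eq[OF \<open>0 < b\<close>] ac_simps)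
  qed
  note swap[OF pos b_lt]
  moreover have "real (k + 1) * A * M \<le> (1 + real k * 2 powr E * A) * A * M"
  proof -
    have "1 \<le> 2 powr E * A" using mult_mono[of 1 "2 powr E" 1 A] \<open>1 \<le> A\<close> \<open>1 \<le> 2 powr E\<close> by simp
    then have "real (k + 1) \<le> 1 + real k * 2 powr E * A"
      using mult_left_mono[of 1 "2 powr E * A" "real k"] by (simp add: mult.assoc)
    then show ?thesis using \<open>1 \<le> A\<close> \<open>0 < M\<close> by (intro mult_right_mono) auto
  qed
  ultimately show ?thesis unfolding A_def M_def E_def by linarith
qed

section \<open>Reduction of \<open>N\<^sub>k\<^sup>-\<close> to the scalar system\<close>

lemma Nminus_scale_iff:
  assumes V: "V \<in> borel_measurable borel" and u: "Hk V k r u"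
    and t: "\<forall>i\<in>{1..k+1}. 0 < t i" and nz: "\<forall>i\<in>{1..k+1}. nonzero (u i)"
  shows "Nminus V p b k r (\<lambda>i x. t i * u i x) \<longleftrightarrow>
    Nminus_scaling {1..k+1} (\<lambda>i. norm_i_sq V k r i (u i)) (\<lambda>i. dir_i k r i (u i))
      (\<lambda>i. lp_i p k r i (u i)) p b t"
proof -
  have Hi: "Hi V k r i (u i)" if "i \<in> {1..k+1}" for i using u that by (simp add: Hk_def)
  then have H1: "H1 (u i)" if "i \<in> {1..k+1}" for i using that by (simp add: Hi_def H10_def)
  have Hk: "Hk V k r (\<lambda>i x. t i * u i x)"
    unfolding Hk_def using Hi t by (auto intro!: Hi_scale)
  have nz': "nonzero (\<lambda>x. t i * u i x)" if "i \<in> {1..k+1}" for i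
    using nz t that by (simp add: nonzero_scale less_imp_neq[symmetric])
  have dir: "dir_i k r i (\<lambda>x. t i * u i x) = (t i)\<^sup>2 * dir_i k r i (u i)"
    and norm: "norm_i_sq V k r i (\<lambda>x. t i * u i x) = (t i)\<^sup>2 * norm_i_sq V k r i (u i)"
    and lp: "lp_i p k r i (\<lambda>x. t i * u i x) = t i powr p * lp_i p k r i (u i)"
    if "i \<in> {1..k+1}" for i
    using H1[OF that] t that by (simp_all add: dir_i_scale norm_i_sq_scale[OF _ V] lp_i_scale)
  have sums: "(\<Sum>j\<in>{1..k+1} - {i}. dir_i k r j (\<lambda>x. t j * u j x))
      = (\<Sum>j\<in>{1..k+1} - {i}. (t j)\<^sup>2 * dir_i k r j (u j))" for i
    by (rule sum.cong) (auto simp: dir)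
  have pt: "(nonzero (\<lambda>x. t i * u i x)
      \<and> norm_i_sq V k r i (\<lambda>x. t i * u i x) + b * (dir_i k r i (\<lambda>x. t i * u i x))\<^sup>2
          + b * dir_i k r i (\<lambda>x. t i * u i x) * (\<Sum>j\<in>{1..k+1} - {i}. dir_i k r j (\<lambda>x. t j * u j x))
        = lp_i p k r i (\<lambda>x. t i * u i x)
      \<and> (4 - p) * lp_i p k r i (\<lambda>x. t i * u i x) < 2 * norm_i_sq V k r i (\<lambda>x. t i * u i x))
    \<longleftrightarrow> ((t i)\<^sup>2 * norm_i_sq V k r i (u i) + b * ((t i)\<^sup>2 * dir_i k r i (u i))\<^sup>2
          + b * ((t i)\<^sup>2 * dir_i k r i (u i)) * (\<Sum>j\<in>{1..k+1} - {i}. (t j)\<^sup>2 * dir_i k r j (u j))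
        = t i powr p * lp_i p k r i (u i)
      \<and> (4 - p) * (t i powr p * lp_i p k r i (u i)) < 2 * ((t i)\<^sup>2 * norm_i_sq V k r i (u i)))"
    if "i \<in> {1..k+1}" for i
    unfolding dir[OF that] norm[OF that] lp[OF that] sums using nz'[OF that] by simp
  show ?thesis
    unfolding Nminus_def Nminus_scaling_def using Hk by (simp only: ball_cong[OF refl pt]) simp
qed

lemma cond_V_nonneg:
  assumes "cond_V V"
  shows "0 \<le> V x"
proof -
  have "(INF x. V x) \<le> V x" using assms by (intro cINF_lower) (auto simp: cond_V_def)
  moreover have "0 < (INF x. V x)" using assms by (simp add: cond_V_def)
  ultimately show ?thesis by simp
qed

lemma dir_i_le_norm_i_sq:
  assumes "\<And>x. 0 \<le> V x" "Hi V k r i w"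
  shows "0 \<le> dir_i k r i w" and "dir_i k r i w \<le> norm_i_sq V k r i w"
proof -
  have "is_weak_grad w (grad w)" and V: "integrable lborel (\<lambda>x. V x * (w x)\<^sup>2)"
    using assms(2) grad_is_weak_grad by (auto simp: Hi_def H10_def H1_def)
  then have G: "integrable lborel (\<lambda>x. (norm (grad w x))\<^sup>2)" by (simp add: is_weak_grad_def)
  have A: "annulus k r i \<in> sets lborel" by simp
  have "set_integrable lborel (annulus k r i) (\<lambda>x. (norm (grad w x))\<^sup>2)"
    and "set_integrable lborel (annulus k r i) (\<lambda>x. V x * (w x)\<^sup>2)"
    unfolding set_integrable_def by (rule integrable_mult_indicator[OF A G], rule integrable_mult_indicator[OF A V])
  then have "norm_i_sq V k r i w = dir_i k r i w + (LINT x:annulus k r i|lborel. V x * (w x)\<^sup>2)"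
    unfolding norm_i_sq_def dir_i_def by (rule set_integral_add(2))
  moreover have "0 \<le> (LINT x:annulus k r i|lborel. V x * (w x)\<^sup>2)" "0 \<le> dir_i k r i w"
    using assms(1) unfolding dir_i_def set_lebesgue_integral_def
    by (auto intro!: integral_nonneg_AE simp: indicator_def)
  ultimately show "0 \<le> dir_i k r i w" "dir_i k r i w \<le> norm_i_sq V k r i w" by simp_all
qed

lemma S_const_nonneg:
  assumes "cond_V V" "Hsp V w" "nonzero w"
  shows "0 \<le> S_const V q"
  unfolding S_const_def
proof (rule cInf_greatest)
  show "{Hnorm_sq V u / Lp_int q u powr (2 / q) |u. Hsp V u \<and> nonzero u} \<noteq> {}"
    using assms by blast
  show "0 \<le> y" if "y \<in> {Hnorm_sq V u / Lp_int q u powr (2 / q) |u. Hsp V u \<and> nonzero u}" for y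
    using that cond_V_nonneg[OF assms(1)] unfolding Hnorm_sq_def
    by (auto intro!: divide_nonneg_nonneg integral_nonneg_AE)
qed

lemma ratio_bound_imp_pos:
  fixes S a c q :: real
  assumes "0 < S" "0 \<le> a" "0 \<le> c" "1 / (2 * S) \<le> c powr q / a"
  shows "0 < a" and "0 < c" and "a / (2 * S) \<le> c powr q"
proof -
  show "0 < a" using assms by (cases "a = 0") auto
  then show "a / (2 * S) \<le> c powr q"
    using assms(4) by (simp add: field_simps)
  moreover have "0 < a / (2 * S)" using assms(1) \<open>0 < a\<close> by simp
  ultimately show "0 < c" using assms(3) by (cases "c = 0") auto
qed

lemma Hi_coefficient_bounds:
  assumes "cond_V V" "Hi V k r i w" "0 < S"
    and "1 / (2 * S) \<le> lp_i p k r i w powr (2 / p) / norm_i_sq V k r i w"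
  shows "0 \<le> dir_i k r i w \<and> dir_i k r i w \<le> norm_i_sq V k r i w \<and> 0 < norm_i_sq V k r i w
    \<and> 0 < lp_i p k r i w \<and> norm_i_sq V k r i w / (2 * S) \<le> lp_i p k r i w powr (2 / p)"
proof -
  have "0 \<le> dir_i k r i w" "dir_i k r i w \<le> norm_i_sq V k r i w"
    using dir_i_le_norm_i_sq[OF cond_V_nonneg[OF assms(1)] assms(2)] by simp_all
  moreover have "0 \<le> lp_i p k r i w"
    unfolding lp_i_def set_lebesgue_integral_def by (auto intro!: integral_nonneg_AE)
  ultimately show ?thesis using ratio_bound_imp_pos[OF assms(3) _ _ assms(4)] by auto
qed

lemma unique_scaling_into_Nminus:
  assumes p: "2 < p" "p < 4" and hV: "cond_V V" and hu: "Hk V k r u"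
    and hnz: "\<forall>i\<in>{1..k+1}. nonzero (u i)" and "0 < S"
    and ratio: "\<forall>i\<in>{1..k+1}. 1 / (2 * S) \<le> lp_i p k r i (u i) powr (2 / p) / norm_i_sq V k r i (u i)"
    and b: "0 < b" "b < (p - 2) / (4 - p)
      * inverse (1 + real k * 2 powr (2 / (p - 2)) * (2 / (4 - p)) powr (2 / (p - 2)))
      * ((4 - p) / 2) powr (2 / (p - 2)) * (2 * S) powr (- (p / (p - 2)))"
  shows "\<exists>t. (\<forall>i\<in>{1..k+1}. 0 < t i) \<and> Nminus V p b k r (\<lambda>i x. t i * u i x)
    \<and> (\<forall>t'. (\<forall>i\<in>{1..k+1}. 0 < t' i) \<and> Nminus V p b k r (\<lambda>i x. t' i * u i x)
      \<longrightarrow> (\<forall>i\<in>{1..k+1}. t' i = t i))"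
proof -
  define a where "a = (\<lambda>i. norm_i_sq V k r i (u i))"
  define d where "d = (\<lambda>i. dir_i k r i (u i))"
  define c where "c = (\<lambda>i. lp_i p k r i (u i))"
  have bounds: "0 \<le> d i \<and> d i \<le> a i \<and> 0 < a i \<and> 0 < c i \<and> a i / (2 * S) \<le> c i powr (2 / p)"
    if "i \<in> {1..k+1}" for i
    using Hi_coefficient_bounds[OF hV hu[unfolded Hk_def, rule_format, OF that] \<open>0 < S\<close>
        ratio[rule_format, OF that]]
    by (simp add: a_def d_def c_def)
  interpret Nminus_scaling_problem "{1..k+1}" a d c p b
    using p b bounds by unfold_locales auto
  have "real (card {1..k+1}) * (2 / (4 - p)) powr (2 / (p - 2)) * (2 * S) powr (p / (p - 2))
      < (p - 2) / (4 - p) / b"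
    using lt_bhat_imp_threshold_bound[OF p \<open>0 < S\<close> b] by simp
  then obtain t where t: "\<forall>i\<in>{1..k+1}. 0 < t i" "Nminus_scaling {1..k+1} a d c p b t"
    and unique: "\<And>t'. \<forall>i\<in>{1..k+1}. 0 < t' i \<Longrightarrow> Nminus_scaling {1..k+1} a d c p b t'
      \<Longrightarrow> \<forall>i\<in>{1..k+1}. t' i = t i"
    using Nminus_scaling_unique_solution[OF \<open>0 < S\<close>] bounds by blast
  have "V \<in> borel_measurable borel"
    using hV by (simp add: cond_V_def borel_measurable_continuous_onI)
  from Nminus_scale_iff[OF this hu _ hnz]
  have "Nminus V p b k r (\<lambda>i x. t i * u i x) \<longleftrightarrow> Nminus_scaling {1..k+1} a d c p b t"
    if "\<forall>i\<in>{1..k+1}. 0 < t i" for t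
    using that by (simp add: a_def d_def c_def)
  then show ?thesis using t unique by blast
qed

theorem lemma2p1:
  fixes V :: "R3 \<Rightarrow> real" and p :: real and k :: nat and r :: "nat \<Rightarrow> real"
    and u :: "nat \<Rightarrow> R3 \<Rightarrow> real"
  assumes hp: "2 < p" "p < 4"
    and hV: "cond_V V"
    and hk: "k \<ge> 1"
    and hr: "Lambda k r"
    and hu: "Hk V k r u"
    and hnz: "\<forall>i\<in>{1..k+1}. nonzero (u i)"
    and hratio: "\<forall>i\<in>{1..k+1}.
        (lp_i p k r i (u i)) powr (2 / p) / norm_i_sq V k r i (u i) \<ge> 1 / (2 * S_const V p)"
  shows "let S = S_const V p;
             bhat = (p - 2) / (4 - p)
                    * inverse (1 + real k * 2 powr (2 / (p - 2)) * (2 / (4 - p)) powr (2 / (p - 2)))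
                    * ((4 - p) / 2) powr (2 / (p - 2)) * (2 * S) powr (- (p / (p - 2)));
             bstar = min ((p - 2) / (4 - p) * ((4 - p) / 2) powr (2 / (p - 2)) * (2 * S) powr (- (p / (p - 2))))
                         bhat
         in \<forall>b. 0 < b \<and> b < bstar \<longrightarrow>
              (\<exists>t. (\<forall>i\<in>{1..k+1}. 0 < t i) \<and> Nminus V p b k r (\<lambda>i x. t i * u i x)
                 \<and> (\<forall>t'. (\<forall>i\<in>{1..k+1}. 0 < t' i) \<and> Nminus V p b k r (\<lambda>i x. t' i * u i x)
                        \<longrightarrow> (\<forall>i\<in>{1..k+1}. t' i = t i)))"
proof -
  have "Hsp V (u 1)" using hu by (simp add: Hk_def Hsp_def Hi_def H10_def)
  then have "0 \<le> S_const V p" using S_const_nonneg hV hnz by simp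
  then show ?thesis
    using unique_scaling_into_Nminus[OF hp hV hu hnz _ hratio]
    by (cases "S_const V p = 0") (auto simp: Let_def)
qed

end
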